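(* Let $n\ge5$ and let $\varrho:H_n\to\mathcal L$ be a homomorphism. For $p\in\overline{\mathrm B}W$ put $p_0:=p$ and $p_i:=\varrho(r_i)p_{i-1}$ for $i=1,\dots,n$ (so $p_n=p_0$), and $\mathrm{Area}(p;\varrho):=\mathrm{Area}(p_1,p_2,\dots,p_n)$. Then $\mathrm{Area}(p;\varrho)$ does not depend on the choice of $p\in\overline{\mathrm B}W$. Moreover, if $\varrho(r_i)\ne1$ for all $i$, then $\mathrm{Area}(p;\varrho)\equiv n\pi\pmod{2\pi}$.
   Context: Let $W$ be a 2-dimensional complex vector space with a hermitian form $\langle\cdot,\cdot\rangle$ of signature $(+,-)$. In $\mathbb{CP}W$ let $\mathrm BW$ be the set of negative points (the Poincaré disc, with hyperbolic metric of curvature $-1$ and the orientation given by its complex structure), $\mathrm SW$ the set of isotropic points (its ideal boundary), and $\overline{\mathrm B}W=\mathrm BW\cup\mathrm SW$. Let $\mathcal L=\mathrm{PU}(W)$ be the group of orientation-preserving isometries of $\mathrm BW$ (it acts on $\overline{\mathrm B}W$). For $p_1,p_2,p_3\in\overline{\mathrm B}W$ the oriented area is $\mathrm{Area}\,\Delta(p_1,p_2,p_3)=2\arg\big(-\langle p_1,p_2\rangle\langle p_2,p_3\rangle\langle p_3,p_1\rangle\big)$ (with $\arg\in[-\pi,\pi]$, computed with any representatives in $W$) when no two vertices are equal isotropic points, and $0$ otherwise; it is the signed area of the geodesic triangle, positive for vertices in counterclockwise order. For $p_1,\dots,p_m\in\overline{\mathrm B}W$, $\mathrm{Area}(p_1,\dots,p_m):=\sum_{k=1}^m\mathrm{Area}\,\Delta(c,p_k,p_{k+1})$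 (indices mod $m$) for any $c\in\overline{\mathrm B}W$; this is independent of $c$. For $n\ge5$, $H_n$ is the group generated by $r_1,\dots,r_n$ with defining relations $r_i^2=1$ ($i=1,\dots,n$) and $r_nr_{n-1}\cdots r_2r_1=1$. *)

theory Defs
  imports "HOL-Analysis.Analysis"
begin

text \<open>W = C^2 with the hermitian form of signature (+,-).
  Points of CP W are represented by nonzero vectors of W.\<close>

type_synonym vecW = "complex ^ 2"
type_synonym matW = "complex ^ 2 ^ 2"

definition herm :: "vecW \<Rightarrow> vecW \<Rightarrow> complex" where
  "herm u v = u $ 1 * cnj (v $ 1) - u $ 2 * cnj (v $ 2)"

definition closed_ball_W :: "vecW \<Rightarrow> bool" where
  "closed_ball_W p \<longleftrightarrow> p \<noteq> 0 \<and> Re (herm p p) \<le> 0"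

definition isotropic :: "vecW \<Rightarrow> bool" where
  "isotropic p \<longleftrightarrow> p \<noteq> 0 \<and> herm p p = 0"

definition proj_eq :: "vecW \<Rightarrow> vecW \<Rightarrow> bool" where
  "proj_eq u v \<longleftrightarrow> (\<exists>c. c \<noteq> 0 \<and> u = c *s v)"

text \<open>Elements of L = PU(W) are represented by matrices preserving the form;
  two matrices represent the same element iff they are proportional.
  In particular an element is the identity iff it is a scalar matrix.\<close>
definition unitaryW :: "matW \<Rightarrow> bool" where
  "unitaryW A \<longleftrightarrow> (\<forall>u v. herm (A *v u) (A *v v) = herm u v)"

definition is_scalar :: "matW \<Rightarrow> bool" where
  "is_scalar A \<longleftrightarrow> (\<exists>c. A = mat c)"

definition tri_area :: "vecW \<Rightarrow> vecW \<Rightarrow> vecW \<Rightarrow> real" where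
  "tri_area p1 p2 p3 =
     (if (isotropic p1 \<and> proj_eq p1 p2) \<or> (isotropic p2 \<and> proj_eq p2 p3)
         \<or> (isotropic p3 \<and> proj_eq p3 p1)
      then 0
      else 2 * Arg (- (herm p1 p2 * herm p2 p3 * herm p3 p1)))"

text \<open>The centre of the disc, used as the auxiliary point c (the area is independent of c).\<close>
definition centreW :: vecW where
  "centreW = (\<chi> i. if i = 2 then 1 else 0)"

definition poly_area :: "vecW list \<Rightarrow> real" where
  "poly_area ps = (\<Sum>k<length ps. tri_area centreW (ps ! k) (ps ! ((k + 1) mod length ps)))"

text \<open>A homomorphism H_n \<rightarrow> L is given by images R 1, ..., R n of the generators
  satisfying the defining relations (up to scalars): R i ^2 = 1 and R n ... R 1 = 1 in PU(W).\<close>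
fun gen_prod :: "(nat \<Rightarrow> matW) \<Rightarrow> nat \<Rightarrow> matW" where
  "gen_prod R 0 = mat 1"
| "gen_prod R (Suc k) = R (Suc k) ** gen_prod R k"

definition is_Hn_rep :: "nat \<Rightarrow> (nat \<Rightarrow> matW) \<Rightarrow> bool" where
  "is_Hn_rep n R \<longleftrightarrow>
     (\<forall>i\<in>{1..n}. unitaryW (R i) \<and> is_scalar (R i ** R i)) \<and> is_scalar (gen_prod R n)"

fun orbit_pts :: "(nat \<Rightarrow> matW) \<Rightarrow> vecW \<Rightarrow> nat \<Rightarrow> vecW" where
  "orbit_pts R p 0 = p"
| "orbit_pts R p (Suc i) = R (Suc i) *v orbit_pts R p i"

definition area_rep :: "nat \<Rightarrow> (nat \<Rightarrow> matW) \<Rightarrow> vecW \<Rightarrow> real" where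
  "area_rep n R p = poly_area (map (orbit_pts R p) [1..<n+1])"

end

theory Submission
  imports Defs
begin

text \<open>Everything rests on the triple product \<open>triple c x y = -\<langle>c,x\<rangle>\<langle>x,y\<rangle>\<langle>y,c\<rangle>\<close>, whose
  argument is half the area of the triangle \<open>c x y\<close>. For a negative point \<open>c\<close> and points \<open>x, y\<close>
  of the closed disc it has positive real part (or vanishes): moving \<open>c\<close> to the centre reduces
  this to an estimate on coordinates. Hence all the arguments involved lie in \<open>(-\<pi>/2, \<pi>/2)\<close>, so
  the cocycle relation between the triple products is additive on arguments, and the area of a
  closed polygon does not depend on the base point.

  An involution \<open>S\<close> reverses the orientation of the quadrilateral \<open>a, Sa, Sb, b\<close> while preserving
  its area, which is therefore zero. Applied at each step of the orbit, this makes the difference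
  of the areas for two starting points telescope.

  For the congruence, \<open>cis\<close> of the area is the sign of the product of the squared triple
  products. A nontrivial element of order two in \<open>PU(W)\<close> has trace zero, so its determinant is
  \<open>-\<mu>\<close> where \<open>S\<^sup>2 = \<mu>\<close>, while \<open>\<mu> \<langle>x,Sx\<rangle>\<^sup>2 = |\<langle>x,Sx\<rangle>|\<^sup>2 > 0\<close>; together with
  \<open>det (R\<^sub>n \<cdots> R\<^sub>1) = \<lambda>\<^sup>2\<close> the product becomes \<open>(-1)\<^sup>n\<close> times a positive real.\<close>

section \<open>Complex arguments and elementary estimates\<close>

lemma cis_eq_imp_2pi_multiple:
  assumes "cis a = cis b"
  obtains k :: int where "a = b + 2 * pi * of_int k"
proof -
  have "cis (a - b) = 1" using assms cis_divide[of a b] by simp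
  then have "cos (a - b) = 1" by (metis cis.sel(1) one_complex.sel(1))
  then obtain k :: int where "a - b = of_int k * 2 * pi" using cos_one_2pi_int by blast
  then show ?thesis using that[of k] by (simp add: algebra_simps)
qed

lemma Arg_mult3_eq_add:
  assumes "z1 * z2 * z3 = of_real r * z0" "0 < r" "z0 \<noteq> 0"
    and "\<bar>Arg z0\<bar> < pi / 2" "\<bar>Arg z1\<bar> < pi / 2" "\<bar>Arg z2\<bar> < pi / 2" "\<bar>Arg z3\<bar> < pi / 2"
  shows "Arg z0 = Arg z1 + Arg z2 + Arg z3"
proof -
  have "z1 \<noteq> 0" "z2 \<noteq> 0" "z3 \<noteq> 0" using assms(1-3) by auto
  then have "cis (Arg z1 + Arg z2 + Arg z3) = sgn (z1 * z2 * z3)"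
    by (simp add: cis_mult[symmetric] cis_Arg sgn_mult)
  also have "\<dots> = cis (Arg z0)"
    using assms(1-3) by (simp add: sgn_mult sgn_of_real cis_Arg)
  finally obtain k :: int where k: "Arg z0 = Arg z1 + Arg z2 + Arg z3 + 2 * pi * of_int k"
    using cis_eq_imp_2pi_multiple by metis
  then have "2 * pi * (- 1) < 2 * pi * of_int k" "2 * pi * of_int k < 2 * pi * 1"
    using assms(4-7) unfolding abs_less_iff by linarith+
  moreover have "0 < 2 * pi" by simp
  ultimately have "- 1 < (of_int k :: real)" "(of_int k :: real) < 1"
    by (simp_all only: mult_less_cancel_left_pos)
  then have "k = 0" by linarith
  then show ?thesis using k by simp
qed

lemma cis_sum_lessThan: "cis (\<Sum>i<(n::nat). f i) = (\<Prod>i<n. cis (f i))"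
  by (induction n) (simp_all add: cis_mult[symmetric])

lemma sgn_prod_lessThan: "sgn (\<Prod>i<(n::nat). f i :: complex) = (\<Prod>i<n. sgn (f i))"
  by (induction n) (simp_all add: sgn_mult)

lemma cis_real_of_nat_mult_pi: "cis (real n * pi) = (- 1) ^ n"
  by (induction n) (simp_all add: distrib_right cis_mult[symmetric])

lemma cis_double_Arg: assumes "z \<noteq> 0" shows "cis (2 * Arg z) = sgn (z\<^sup>2)"
proof -
  have "cis (2 * Arg z) = cis (Arg z) * cis (Arg z)" by (simp add: cis_mult)
  then show ?thesis using assms by (simp add: cis_Arg sgn_mult power2_eq_square)
qed

lemma prod_lessThan_shift_cyclic:
  fixes f :: "nat \<Rightarrow> 'a::field"
  assumes "f n = c * f 0" "f 0 \<noteq> 0"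
  shows "(\<Prod>i<n. f (Suc i)) = c * (\<Prod>i<n. f i)"
proof -
  have "f 0 * (\<Prod>i<n. f (Suc i)) = (\<Prod>i<n. f i) * f n"
    using prod.lessThan_Suc_shift[of f n] prod.lessThan_Suc[of f n] by simp
  then show ?thesis using assms by (simp add: mult_ac)
qed

lemma two_mult_less_sq_sum:
  fixes a c x y :: real
  assumes "0 \<le> c" "c < a" "0 \<le> x" "0 \<le> y" "x \<noteq> 0 \<or> y \<noteq> 0"
  shows "2 * (a * c * x * y) < a\<^sup>2 * (x\<^sup>2 + y\<^sup>2)"
proof -
  have "0 < x\<^sup>2 + y\<^sup>2" using assms(5) by (auto simp: add_pos_nonneg add_nonneg_pos)
  have "c * (2 * x * y) \<le> c * (x\<^sup>2 + y\<^sup>2)"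
    using sum_squares_bound[of x y] assms(1) by (rule mult_left_mono)
  also have "\<dots> < a * (x\<^sup>2 + y\<^sup>2)" using assms(2) \<open>0 < x\<^sup>2 + y\<^sup>2\<close> by simp
  finally have "a * (c * (2 * x * y)) < a * (a * (x\<^sup>2 + y\<^sup>2))" using assms(1,2) by simp
  then show ?thesis by (simp add: power2_eq_square mult_ac)
qed

section \<open>Coordinates and the hermitian form\<close>

lemma matrix_vector_mult_nth_1: "((A::matW) *v x) $ 1 = A$1$1 * x$1 + A$1$2 * x$2"
  by (simp add: matrix_vector_mult_def sum_2)

lemma matrix_vector_mult_nth_2: "((A::matW) *v x) $ 2 = A$2$1 * x$1 + A$2$2 * x$2"
  by (simp add: matrix_vector_mult_def sum_2)

lemma matrix_matrix_mult_nth: "((A::matW) ** B) $ i $ j = A$i$1 * B$1$j + A$i$2 * B$2$j"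
  by (simp add: matrix_matrix_mult_def sum_2)

lemma mat_nth:
  "(mat c :: matW) $ 1 $ 1 = c" "(mat c :: matW) $ 2 $ 2 = c"
  "(mat c :: matW) $ 1 $ 2 = 0" "(mat c :: matW) $ 2 $ 1 = 0"
  by (simp_all add: mat_def)

lemma mat_mult_vec: "(mat c :: matW) *v v = c *s v"
  by (simp add: vec_eq_iff forall_2 matrix_vector_mult_nth_1 matrix_vector_mult_nth_2 mat_nth)

lemma matrix_vector_mult_scale: "(S::matW) *v (c *s v) = c *s (S *v v)"
  by (simp add: vec_eq_iff forall_2 matrix_vector_mult_nth_1 matrix_vector_mult_nth_2 algebra_simps)

lemma det_mat_W: "det (mat c :: matW) = c * c"
  by (simp add: det_2 mat_nth)

lemma cnj_herm: "cnj (herm u v) = herm v u"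
  by (simp add: herm_def)

lemma herm_scale_left: "herm (c *s u) v = c * herm u v"
  by (simp add: herm_def algebra_simps)

lemma herm_scale_right: "herm u (c *s v) = cnj c * herm u v"
  by (simp add: herm_def algebra_simps)

lemma herm_self: "herm u u = of_real ((cmod (u$1))\<^sup>2 - (cmod (u$2))\<^sup>2)"
  by (simp only: herm_def complex_norm_square of_real_diff)

lemma herm_zero_left: "herm 0 v = 0"
  by (simp add: herm_def)

lemma herm_nondegenerate: assumes "\<And>v. herm u v = 0" shows "u = 0"
proof -
  have "herm u (\<chi> i. if i = 1 then 1 else 0) = u$1" "herm u (\<chi> i. if i = 1 then 0 else 1) = - u$2"
    by (simp_all add: herm_def)
  then show ?thesis using assms by (simp add: vec_eq_iff forall_2)
qed

lemma unitaryW_mult_vec_nonzero: assumes "unitaryW A" "v \<noteq> 0" shows "A *v v \<noteq> 0"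
proof
  assume "A *v v = 0"
  then have "herm v u = 0" for u
    using assms(1) herm_zero_left unfolding unitaryW_def by metis
  then show False using herm_nondegenerate assms(2) by blast
qed

section \<open>Negative points and the closed disc\<close>

definition neg_W :: "vecW \<Rightarrow> bool" where
  "neg_W d \<longleftrightarrow> Re (herm d d) < 0"

lemma centreW_nth [simp]: "centreW $ 1 = 0" "centreW $ 2 = 1"
  by (simp_all add: centreW_def)

lemma neg_W_centreW: "neg_W centreW"
  by (simp add: neg_W_def herm_def)

lemma neg_W_imp_closed_ball_W: "neg_W d \<Longrightarrow> closed_ball_W d"
  by (auto simp: neg_W_def closed_ball_W_def herm_def)

lemma neg_W_cmod_less: assumes "neg_W d" shows "cmod (d$1) < cmod (d$2)"
proof -
  have "(cmod (d$1))\<^sup>2 < (cmod (d$2))\<^sup>2" using assms by (simp add: neg_W_def herm_self)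
  then show ?thesis by (simp add: power_less_imp_less_base)
qed

lemma closed_ball_W_cmod_le: assumes "closed_ball_W x"
  shows "cmod (x$1) \<le> cmod (x$2)" and "x$2 \<noteq> 0"
proof -
  have "Re (herm x x) \<le> 0" "x \<noteq> 0" using assms by (auto simp: closed_ball_W_def)
  then have le: "(cmod (x$1))\<^sup>2 \<le> (cmod (x$2))\<^sup>2" by (simp add: herm_self)
  then show "cmod (x$1) \<le> cmod (x$2)" by (simp add: power_mono_iff)
  show "x$2 \<noteq> 0"
  proof
    assume "x$2 = 0"
    with le have "x$1 = 0" by simp
    with \<open>x$2 = 0\<close> \<open>x \<noteq> 0\<close> show False by (simp add: vec_eq_iff forall_2)
  qed
qed

lemma closed_ball_W_unitary: "unitaryW A \<Longrightarrow> closed_ball_W v \<Longrightarrow> closed_ball_W (A *v v)"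
  using unitaryW_mult_vec_nonzero by (auto simp: closed_ball_W_def unitaryW_def)

lemma neg_W_unitary: "unitaryW A \<Longrightarrow> neg_W v \<Longrightarrow> neg_W (A *v v)"
  by (auto simp: neg_W_def unitaryW_def)

lemma herm_neg_closed_ball_nonzero: assumes "neg_W d" "closed_ball_W x" shows "herm d x \<noteq> 0"
proof
  assume "herm d x = 0"
  then have "d$1 * cnj (x$1) = d$2 * cnj (x$2)" by (simp add: herm_def)
  then have "cmod (d$1) * cmod (x$1) = cmod (d$2) * cmod (x$2)" by (metis complex_mod_cnj norm_mult)
  moreover have "cmod (d$1) * cmod (x$1) \<le> cmod (d$1) * cmod (x$2)"
    using closed_ball_W_cmod_le(1)[OF assms(2)] by (simp add: mult_left_mono)
  moreover have "cmod (d$1) * cmod (x$2) < cmod (d$2) * cmod (x$2)"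
    using neg_W_cmod_less[OF assms(1)] closed_ball_W_cmod_le(2)[OF assms(2)] by simp
  ultimately show False by linarith
qed

lemma closed_ball_W_orthogonal_proportional:
  assumes "closed_ball_W x" "closed_ball_W y" "herm x y = 0"
  obtains t where "t \<noteq> 0" "y = t *s x"
proof -
  have x: "cmod (x$1) \<le> cmod (x$2)" "x$2 \<noteq> 0" and y: "cmod (y$1) \<le> cmod (y$2)" "y$2 \<noteq> 0"
    using closed_ball_W_cmod_le assms by auto
  have e: "x$1 * cnj (y$1) = x$2 * cnj (y$2)" using assms(3) by (simp add: herm_def)
  then have "cmod (x$1) * cmod (y$1) = cmod (x$2) * cmod (y$2)" by (metis complex_mod_cnj norm_mult)
  moreover have "cmod (x$1) * cmod (y$1) \<le> cmod (x$2) * cmod (y$1)" using x by (simp add: mult_right_mono)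
  moreover have "cmod (x$2) * cmod (y$1) \<le> cmod (x$2) * cmod (y$2)" using y by (simp add: mult_left_mono)
  ultimately have "cmod (y$1) = cmod (y$2)" using x by (simp add: mult_left_cancel)
  then have "y$1 * cnj (y$1) = y$2 * cnj (y$2)" by (simp add: complex_norm_square[symmetric])
  then have "(x$1 * y$2) * cnj (y$2) = (y$1 * x$2) * cnj (y$2)"
    by (metis e mult.assoc mult.commute)
  then have "x$1 * y$2 = y$1 * x$2" using y by simp
  then have "y = (y$2 / x$2) *s x" and "y$2 / x$2 \<noteq> 0"
    using x y by (simp_all add: vec_eq_iff forall_2 field_simps)
  then show ?thesis using that by blast
qed

section \<open>The triple product\<close>

definition triple :: "vecW \<Rightarrow> vecW \<Rightarrow> vecW \<Rightarrow> complex" where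
  "triple u v w = - (herm u v * herm v w * herm w u)"

lemma tri_area_eq_triple: "tri_area u v w = 2 * Arg (triple u v w)"
proof -
  have orth: "herm x y = 0" if iso: "isotropic x" and eq: "proj_eq x y" for x y
  proof -
    obtain t where t: "t \<noteq> 0" "x = t *s y" using eq by (auto simp: proj_eq_def)
    then have "herm x x = t * cnj t * herm y y" by (simp add: herm_scale_left herm_scale_right)
    then have "herm y y = 0" using iso t by (simp add: isotropic_def)
    then show ?thesis using t by (simp add: herm_scale_left)
  qed
  show ?thesis
  proof (cases "(isotropic u \<and> proj_eq u v) \<or> (isotropic v \<and> proj_eq v w) \<or> (isotropic w \<and> proj_eq w u)")
    case True
    then have "triple u v w = 0" using orth by (auto simp: triple_def)
    then show ?thesis using True by (simp add: tri_area_def Arg_zero)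
  next
    case False
    then show ?thesis unfolding tri_area_def triple_def by (simp only: if_False)
  qed
qed

lemma triple_rotate: "triple u v w = triple v w u"
  by (simp add: triple_def mult_ac)

lemma triple_swap: "triple u w v = cnj (triple u v w)"
  by (simp add: triple_def cnj_herm mult_ac)

lemma triple_scale_1: "triple (t *s u) v w = of_real ((cmod t)\<^sup>2) * triple u v w"
  unfolding triple_def herm_scale_left herm_scale_right complex_norm_square by (simp add: mult_ac)

lemma triple_scale_2: "triple u (t *s v) w = of_real ((cmod t)\<^sup>2) * triple u v w"
  using triple_scale_1[of t v w u] triple_rotate by metis

lemma triple_scale_3: "triple u v (t *s w) = of_real ((cmod t)\<^sup>2) * triple u v w"
  using triple_scale_1[of t w u v] triple_rotate by metis

lemma triple_unitary: "unitaryW A \<Longrightarrow> triple (A *v u) (A *v v) (A *v w) = triple u v w"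
  by (simp add: triple_def unitaryW_def)

lemma Arg_triple_scale:
  assumes "t \<noteq> 0"
  shows "Arg (triple (t *s u) v w) = Arg (triple u v w)"
    and "Arg (triple u (t *s v) w) = Arg (triple u v w)"
    and "Arg (triple u v (t *s w)) = Arg (triple u v w)"
  using assms Arg_times_of_real[of "(cmod t)\<^sup>2"]
  by (simp_all add: triple_scale_1 triple_scale_2 triple_scale_3 del: of_real_power)

lemma Re_triple_centreW_pos:
  assumes "closed_ball_W x" "closed_ball_W y"
  shows "0 < Re (triple centreW x y) \<or> triple centreW x y = 0"
proof -
  define N where "N = (cmod (x$2))\<^sup>2 * (cmod (y$2))\<^sup>2"
  define P where "P = cnj (x$2) * y$2 * x$1 * cnj (y$1)"
  have eq: "triple centreW x y = of_real N - P"
    unfolding triple_def herm_def N_def P_def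
    by (simp only: of_real_mult complex_norm_square) (simp add: algebra_simps)
  have "cmod P = cmod (x$1) * cmod (y$1) * (cmod (x$2) * cmod (y$2))"
    by (simp add: P_def norm_mult)
  also have "\<dots> \<le> (cmod (x$2) * cmod (y$2)) * (cmod (x$2) * cmod (y$2))"
    using closed_ball_W_cmod_le(1) assms by (intro mult_right_mono mult_mono) auto
  finally have PN: "cmod P \<le> N" by (simp add: N_def power2_eq_square mult_ac)
  show ?thesis
  proof (cases "0 < Re (triple centreW x y)")
    case False
    then have "Re P = cmod P" "Re P = N" using eq PN complex_Re_le_cmod[of P] by auto
    moreover have "(cmod P)\<^sup>2 = (Re P)\<^sup>2 + (Im P)\<^sup>2" by (simp add: cmod_power2)
    ultimately have "P = of_real N" by (simp add: complex_eq_iff)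
    then show ?thesis using eq by simp
  qed simp
qed

text \<open>Up to the positive factor \<open>-\<langle>c,c\<rangle>\<close>, \<open>to_centre c\<close> is an isometry taking \<open>c\<close> to the centre.\<close>

definition to_centre :: "vecW \<Rightarrow> vecW \<Rightarrow> vecW" where
  "to_centre c u = (\<chi> i. if i = 1 then c$2 * u$1 - c$1 * u$2 else - cnj (c$1) * u$1 + cnj (c$2) * u$2)"

lemma herm_to_centre: "herm (to_centre c u) (to_centre c v) = - herm c c * herm u v"
  by (simp add: to_centre_def herm_def algebra_simps)

lemma to_centre_self: "to_centre c c = (- herm c c) *s centreW"
  by (simp add: to_centre_def herm_def vec_eq_iff forall_2 mult_ac)

lemma Re_triple_pos:
  assumes "neg_W c" "closed_ball_W x" "closed_ball_W y"
  shows "0 < Re (triple c x y) \<or> triple c x y = 0"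
proof -
  define k where "k = - Re (herm c c)"
  have k: "- herm c c = of_real k" by (simp add: k_def herm_self)
  have "0 < k" using assms(1) by (simp add: k_def neg_W_def)
  have closed: "closed_ball_W (to_centre c u)" if "closed_ball_W u" for u
  proof -
    have "to_centre c u \<noteq> 0"
    proof
      assume "to_centre c u = 0"
      then have "herm u v = 0" for v
        using herm_to_centre[of c u v] \<open>0 < k\<close> by (simp add: k herm_zero_left)
      then show False using herm_nondegenerate that by (auto simp: closed_ball_W_def)
    qed
    moreover have "Re (herm (to_centre c u) (to_centre c u)) = k * Re (herm u u)"
      by (simp add: herm_to_centre k)
    ultimately show ?thesis
      using that \<open>0 < k\<close> by (simp add: closed_ball_W_def mult_nonneg_nonpos)
  qed
  have "of_real k * of_real k * (of_real k * triple c x y)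
      = triple (to_centre c c) (to_centre c x) (to_centre c y)"
    unfolding triple_def herm_to_centre k by (simp only: mult_ac mult_minus_right)
  also have "\<dots> = of_real k * of_real k * triple centreW (to_centre c x) (to_centre c y)"
    unfolding to_centre_self k triple_scale_1 by (simp add: power2_eq_square)
  finally have "of_real k * triple c x y = triple centreW (to_centre c x) (to_centre c y)"
    using \<open>0 < k\<close> by simp
  then have "triple c x y = of_real (1 / k) * triple centreW (to_centre c x) (to_centre c y)"
    using \<open>0 < k\<close> by (simp add: field_simps)
  then show ?thesis
    using Re_triple_centreW_pos[OF closed[OF assms(2)] closed[OF assms(3)]] \<open>0 < k\<close> by auto
qed

lemma Arg_triple_abs_less:
  "neg_W c \<Longrightarrow> closed_ball_W x \<Longrightarrow> closed_ball_W y \<Longrightarrow> \<bar>Arg (triple c x y)\<bar> < pi / 2"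
  using Re_triple_pos Arg_Re_pos by blast

lemma Arg_triple_swap:
  assumes "neg_W c" "closed_ball_W x" "closed_ball_W y"
  shows "Arg (triple c y x) = - Arg (triple c x y)"
proof -
  have "Arg (triple c x y) = 0" if "triple c x y \<in> \<real>"
    using that Arg_triple_abs_less[OF assms] by (auto simp: Arg_real split: if_splits)
  then show ?thesis by (simp add: triple_swap[of c y x] Arg_cnj)
qed

lemma Arg_triple_cocycle:
  assumes "neg_W c" "neg_W d" "closed_ball_W x" "closed_ball_W y"
  shows "Arg (triple c x y) = Arg (triple d c x) + Arg (triple d x y) + Arg (triple d y c)"
proof (cases "herm x y = 0")
  case False
  have c: "closed_ball_W c" using assms(1) neg_W_imp_closed_ball_W by blast
  have nz: "herm d c \<noteq> 0" "herm d x \<noteq> 0" "herm d y \<noteq> 0" "herm c x \<noteq> 0" "herm y c \<noteq> 0"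
    using herm_neg_closed_ball_nonzero[of c y] cnj_herm[of c y] herm_neg_closed_ball_nonzero assms c
    by auto
  define r where "r = (cmod (herm d c))\<^sup>2 * (cmod (herm d x))\<^sup>2 * (cmod (herm d y))\<^sup>2"
  have "0 < r" using nz by (simp add: r_def)
  have "triple d c x * triple d x y * triple d y c = of_real r * triple c x y"
    unfolding triple_def r_def of_real_mult complex_norm_square
    by (simp add: cnj_herm[symmetric, of d c] cnj_herm[symmetric, of d x] cnj_herm[symmetric, of d y] mult_ac)
  moreover have "triple c x y \<noteq> 0" using nz False by (simp add: triple_def)
  ultimately show ?thesis
    using Arg_mult3_eq_add \<open>0 < r\<close> Arg_triple_abs_less assms c triple_rotate by metis
next
  case True
  then obtain t where t: "t \<noteq> 0" "y = t *s x"
    using closed_ball_W_orthogonal_proportional assms(3,4) by blast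
  have "triple c x y = 0" "triple d x y = 0" using True by (simp_all add: triple_def)
  moreover have "Arg (triple d y c) = - Arg (triple d c x)"
    using Arg_triple_scale(2)[OF t(1)] Arg_triple_swap[OF assms(2) neg_W_imp_closed_ball_W[OF assms(1)]
        assms(3)] t(2) by simp
  ultimately show ?thesis by (simp add: Arg_zero)
qed

definition quad_arg :: "vecW \<Rightarrow> vecW \<Rightarrow> vecW \<Rightarrow> vecW \<Rightarrow> vecW \<Rightarrow> real" where
  "quad_arg c a b e g = Arg (triple c a b) + Arg (triple c b e) + Arg (triple c e g) + Arg (triple c g a)"

lemma quad_arg_base_independent:
  assumes "neg_W c" "neg_W d"
    and "closed_ball_W a" "closed_ball_W b" "closed_ball_W e" "closed_ball_W g"
  shows "quad_arg c a b e g = quad_arg d a b e g"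
proof -
  have "Arg (triple c x y) = Arg (triple d c x) + Arg (triple d x y) - Arg (triple d c y)"
    if "closed_ball_W x" "closed_ball_W y" for x y
    using Arg_triple_cocycle[OF assms(1,2) that]
      Arg_triple_swap[OF assms(2) that(2) neg_W_imp_closed_ball_W[OF assms(1)]] by simp
  then show ?thesis unfolding quad_arg_def using assms(3-6) by simp
qed

text \<open>Applying an involution \<open>S\<close> maps the quadrilateral \<open>a, Sa, Sb, b\<close> to \<open>Sa, a, b, Sb\<close>, the
  same one with the opposite orientation.\<close>

lemma quad_arg_involution:
  assumes "unitaryW S" "S ** S = mat \<mu>" "neg_W c" "closed_ball_W a" "closed_ball_W b"
  shows "quad_arg c a (S *v a) (S *v b) b = 0"
proof -
  have Sa: "closed_ball_W (S *v a)" and Sb: "closed_ball_W (S *v b)"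
    using closed_ball_W_unitary assms by auto
  have SS: "S *v (S *v v) = \<mu> *s v" for v
    by (simp add: matrix_vector_mul_assoc assms(2) mat_mult_vec)
  have "\<mu> *s a \<noteq> 0"
    using SS[of a] unitaryW_mult_vec_nonzero assms(1) Sa by (metis closed_ball_W_def)
  then have "\<mu> \<noteq> 0" by auto
  have "quad_arg c a (S *v a) (S *v b) b
      = quad_arg (S *v c) (S *v a) (S *v (S *v a)) (S *v (S *v b)) (S *v b)"
    unfolding quad_arg_def triple_unitary[OF assms(1)] ..
  also have "\<dots> = quad_arg (S *v c) (S *v a) a b (S *v b)"
    unfolding SS quad_arg_def Arg_triple_scale[OF \<open>\<mu> \<noteq> 0\<close>] ..
  also have "\<dots> = quad_arg c (S *v a) a b (S *v b)"
    using quad_arg_base_independent[OF neg_W_unitary[OF assms(1,3)] assms(3)] Sa Sb assms(4,5)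
    by simp
  also have "\<dots> = - quad_arg c a (S *v a) (S *v b) b"
    unfolding quad_arg_def
    using Arg_triple_swap[OF assms(3) assms(4) Sa] Arg_triple_swap[OF assms(3) assms(4,5)]
      Arg_triple_swap[OF assms(3) Sb assms(5)] Arg_triple_swap[OF assms(3) Sa Sb] by simp
  finally show ?thesis by simp
qed

lemma Arg_triple_involution:
  assumes "unitaryW S" "S ** S = mat \<mu>" "neg_W c" "closed_ball_W a" "closed_ball_W b"
  shows "Arg (triple c a (S *v a)) + Arg (triple c (S *v a) (S *v b))
       = Arg (triple c b (S *v b)) + Arg (triple c a b)"
  using quad_arg_involution[OF assms] Arg_triple_swap[OF assms(3) assms(4,5)]
    Arg_triple_swap[OF assms(3) closed_ball_W_unitary[OF assms(1,5)] assms(5)]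
  unfolding quad_arg_def by simp

section \<open>Orbits of a representation and independence of the base point\<close>

lemma is_Hn_rep_generator:
  assumes "is_Hn_rep n R" "i < n"
  obtains \<mu> where "unitaryW (R (Suc i))" "R (Suc i) ** R (Suc i) = mat \<mu>"
proof -
  have "Suc i \<in> {1..n}" using assms(2) by simp
  then have "unitaryW (R (Suc i))" "is_scalar (R (Suc i) ** R (Suc i))"
    using assms(1) by (auto simp: is_Hn_rep_def)
  then show ?thesis using that by (auto simp: is_scalar_def)
qed

lemma orbit_pts_eq_gen_prod: "orbit_pts R p i = gen_prod R i *v p"
  by (induction i) (simp_all add: matrix_vector_mul_assoc)

lemma closed_ball_W_orbit_pts:
  assumes "is_Hn_rep n R" "closed_ball_W p" "i \<le> n"
  shows "closed_ball_W (orbit_pts R p i)"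
  using assms(3)
proof (induction i)
  case (Suc i)
  then obtain \<mu> where "unitaryW (R (Suc i))" using is_Hn_rep_generator[OF assms(1)] by (metis Suc_le_lessD)
  then show ?case using Suc closed_ball_W_unitary by simp
qed (simp add: assms(2))

lemma gen_prod_scalar:
  assumes "is_Hn_rep n R" "closed_ball_W p"
  obtains lam where "gen_prod R n = mat lam" "lam \<noteq> 0" "\<And>q. orbit_pts R q n = lam *s q"
proof -
  obtain lam where lam: "gen_prod R n = mat lam" using assms(1) by (auto simp: is_Hn_rep_def is_scalar_def)
  then have orbit: "orbit_pts R q n = lam *s q" for q by (simp add: orbit_pts_eq_gen_prod mat_mult_vec)
  have "closed_ball_W (orbit_pts R p n)" using closed_ball_W_orbit_pts assms by blast
  then have "lam \<noteq> 0" using orbit by (auto simp: closed_ball_W_def)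
  then show ?thesis using that lam orbit by blast
qed

text \<open>The polygon closes up projectively, so its area is the sum over the orbit
  \<open>p\<^sub>0, \<dots>, p\<^sub>n\<close> with \<open>p\<^sub>n = \<lambda> p\<^sub>0\<close>.\<close>

lemma area_rep_eq_sum:
  assumes "n \<ge> 1" "orbit_pts R p n = lam *s p" "lam \<noteq> 0"
  shows "area_rep n R p = (\<Sum>i<n. 2 * Arg (triple centreW (orbit_pts R p i) (orbit_pts R p (Suc i))))"
proof -
  let ?P = "orbit_pts R p"
  let ?g = "\<lambda>i. 2 * Arg (triple centreW (?P i) (?P (Suc i)))"
  obtain m where m: "n = Suc m" using assms(1) by (cases n) auto
  have "area_rep n R p = (\<Sum>k<n. 2 * Arg (triple centreW (?P (Suc k)) (?P (Suc (Suc k mod n)))))"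
  proof -
    have "map ?P [1..<n+1] ! k = ?P (Suc k)" if "k < n" for k
      using that by (subst nth_map_upt) auto
    moreover have "Suc k mod n < n" for k using assms(1) by simp
    ultimately show ?thesis
      unfolding area_rep_def poly_area_def tri_area_eq_triple length_map length_upt
      by (intro sum.cong) auto
  qed
  also have "\<dots> = (\<Sum>k<m. ?g (Suc k)) + 2 * Arg (triple centreW (?P n) (?P 1))"
    unfolding m by (simp add: sum.lessThan_Suc)
  also have "Arg (triple centreW (?P n) (?P 1)) = Arg (triple centreW p (?P 1))"
    unfolding assms(2) Arg_triple_scale(2)[OF assms(3)] ..
  also have "(\<Sum>k<m. ?g (Suc k)) + 2 * Arg (triple centreW p (?P 1)) = (\<Sum>i<n. ?g i)"
    unfolding m sum.lessThan_Suc_shift by simp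
  finally show ?thesis .
qed

text \<open>Each step of the difference between two orbits is a quadrilateral \<open>p\<^sub>i, p\<^sub>i\<^sub>+\<^sub>1, q\<^sub>i\<^sub>+\<^sub>1, q\<^sub>i\<close>
  of zero area, so the difference telescopes.\<close>

lemma area_rep_independent:
  assumes "n \<ge> 1" "is_Hn_rep n R" "closed_ball_W p" "closed_ball_W q"
  shows "area_rep n R p = area_rep n R q"
proof -
  obtain lam where lam: "lam \<noteq> 0" "\<And>q. orbit_pts R q n = lam *s q"
    using gen_prod_scalar assms(2,3) by metis
  let ?P = "orbit_pts R p" and ?Q = "orbit_pts R q"
  define F where "F i = Arg (triple centreW (?P i) (?Q i))" for i
  have step: "Arg (triple centreW (?P i) (?P (Suc i))) - Arg (triple centreW (?Q i) (?Q (Suc i)))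
      = F i - F (Suc i)" if i: "i < n" for i
  proof -
    obtain \<mu> where S: "unitaryW (R (Suc i))" "R (Suc i) ** R (Suc i) = mat \<mu>"
      using is_Hn_rep_generator[OF assms(2) i] .
    have "closed_ball_W (?P i)" "closed_ball_W (?Q i)"
      using closed_ball_W_orbit_pts assms i by auto
    from Arg_triple_involution[OF S neg_W_centreW this] show ?thesis by (simp add: F_def)
  qed
  have "area_rep n R p - area_rep n R q
      = 2 * (\<Sum>i<n. Arg (triple centreW (?P i) (?P (Suc i))) - Arg (triple centreW (?Q i) (?Q (Suc i))))"
    using area_rep_eq_sum[OF assms(1) lam(2) lam(1)] area_rep_eq_sum[OF assms(1) lam(2) lam(1)]
    by (simp add: sum_subtractf sum_distrib_left)
  also have "\<dots> = 2 * (F 0 - F n)"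
    using step sum_lessThan_telescope'[of F n] by simp
  also have "F n = F 0"
    unfolding F_def lam(2) Arg_triple_scale(2,3)[OF lam(1)] by simp
  finally show ?thesis by simp
qed

section \<open>The area modulo \<open>2\<pi>\<close>\<close>

lemma involution_trace_det:
  assumes "S ** S = mat \<mu>" "\<not> is_scalar S"
  shows "S$2$2 = - S$1$1" and "det S = - \<mu>"
proof -
  let ?a = "S$1$1" and ?b = "S$1$2" and ?c = "S$2$1" and ?d = "S$2$2"
  have e: "?b * (?a + ?d) = 0" "?c * (?a + ?d) = 0" "?a * ?a + ?b * ?c = \<mu>" "?c * ?b + ?d * ?d = \<mu>"
    using arg_cong[OF assms(1), of "\<lambda>A. A$1$2"] arg_cong[OF assms(1), of "\<lambda>A. A$2$1"]
      arg_cong[OF assms(1), of "\<lambda>A. A$1$1"] arg_cong[OF assms(1), of "\<lambda>A. A$2$2"]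
    by (simp_all add: matrix_matrix_mult_nth mat_nth algebra_simps)
  show trace: "?d = - ?a"
  proof (rule ccontr)
    assume "?d \<noteq> - ?a"
    then have "?a + ?d \<noteq> 0" by (metis add.commute neg_eq_iff_add_eq_0)
    then have "?b = 0" "?c = 0" using e(1,2) by auto
    then have "(?a - ?d) * (?a + ?d) = 0" using e(3,4) by (simp add: algebra_simps)
    then have "S = mat ?a"
      using \<open>?a + ?d \<noteq> 0\<close> \<open>?b = 0\<close> \<open>?c = 0\<close> by (simp add: vec_eq_iff forall_2 mat_def)
    then show False using assms(2) by (auto simp: is_scalar_def)
  qed
  show "det S = - \<mu>" using e trace by (simp add: det_2 algebra_simps)
qed

text \<open>From \<open>S\<^sup>2 = \<mu>\<close> and unitarity, \<open>\<langle>Sx,x\<rangle> = \<langle>Sx,S(S x/\<mu>)\<rangle> = \<langle>x,Sx\<rangle>/\<mu>\<close>, conjugated.\<close>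

lemma involution_herm_sq:
  assumes "unitaryW S" "S ** S = mat \<mu>"
  shows "\<mu> * (herm x (S *v x))\<^sup>2 = of_real ((cmod (herm x (S *v x)))\<^sup>2)"
proof -
  have SS: "S *v (S *v v) = \<mu> *s v" for v
    by (simp add: matrix_vector_mul_assoc assms(2) mat_mult_vec)
  have "((\<chi> i. if i = 1 then 1 else 0) :: vecW) \<noteq> 0" by (simp add: vec_eq_iff forall_2)
  then have "\<mu> \<noteq> 0" using SS unitaryW_mult_vec_nonzero[OF assms(1)] by (metis vector_smult_lzero)
  define z where "z = herm x (S *v x)"
  have "cnj z = herm (S *v x) (S *v ((1 / \<mu>) *s (S *v x)))"
    using \<open>\<mu> \<noteq> 0\<close> by (simp add: z_def cnj_herm matrix_vector_mult_scale SS)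
  also have "\<dots> = cnj (1 / \<mu>) * z"
    using assms(1) by (simp add: unitaryW_def herm_scale_right z_def)
  finally have "\<mu> * z = cnj z"
    using \<open>\<mu> \<noteq> 0\<close> by (metis complex_cnj_cnj complex_cnj_mult nonzero_eq_divide_eq mult.commute
        divide_inverse mult_1)
  then have "\<mu> * z\<^sup>2 = z * cnj z" by (simp add: power2_eq_square mult_ac)
  then show ?thesis unfolding z_def complex_norm_square .
qed

text \<open>With \<open>S = [[a, b], [c, -a]]\<close> unitary, \<open>|a|\<^sup>2 = 1 + |c|\<^sup>2\<close> and \<open>a b\<^sup>* = -c a\<^sup>*\<close>;
  then \<open>Re (a \<langle>x,Sx\<rangle>) = |a|\<^sup>2 (|x\<^sub>1|\<^sup>2 + |x\<^sub>2|\<^sup>2) - 2 Re (c a\<^sup>* x\<^sub>1 x\<^sub>2\<^sup>*) > 0\<close>.\<close>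

lemma herm_trace_zero_unitary_nonzero:
  assumes "unitaryW S" "S$2$2 = - S$1$1" "x \<noteq> 0"
  shows "herm x (S *v x) \<noteq> 0"
proof -
  let ?a = "S$1$1" and ?b = "S$1$2" and ?c = "S$2$1"
  let ?e1 = "(\<chi> i. if i = 1 then 1 else 0) :: vecW" and ?e2 = "(\<chi> i. if i = 1 then 0 else 1) :: vecW"
  have "herm (S *v ?e1) (S *v ?e1) = herm ?e1 ?e1" "herm (S *v ?e1) (S *v ?e2) = herm ?e1 ?e2"
    using assms(1) by (simp_all add: unitaryW_def)
  then have r1: "?a * cnj ?a - ?c * cnj ?c = 1" and r2: "?a * cnj ?b + ?c * cnj ?a = 0"
    using assms(2) by (simp_all add: herm_def matrix_vector_mult_nth_1 matrix_vector_mult_nth_2)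
  define P where "P = ?c * cnj ?a * x$1 * cnj (x$2)"
  have "?a * herm x (S *v x)
      = ?a * cnj ?a * (x$1 * cnj (x$1) + x$2 * cnj (x$2)) + (?a * cnj ?b) * x$1 * cnj (x$2)
        - ?a * cnj ?c * cnj (x$1) * x$2"
    by (simp add: herm_def matrix_vector_mult_nth_1 matrix_vector_mult_nth_2 assms(2) algebra_simps)
  also have "\<dots> = ?a * cnj ?a * (x$1 * cnj (x$1) + x$2 * cnj (x$2)) - (P + cnj P)"
    using r2 by (simp add: P_def algebra_simps eq_neg_iff_add_eq_0[symmetric])
  finally have "Re (?a * herm x (S *v x))
      = (cmod ?a)\<^sup>2 * ((cmod (x$1))\<^sup>2 + (cmod (x$2))\<^sup>2) - 2 * Re P"
    by (simp add: complex_norm_square[symmetric] del: of_real_power)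
  moreover have "Re P \<le> cmod ?a * cmod ?c * cmod (x$1) * cmod (x$2)"
    using complex_Re_le_cmod[of P] by (simp add: P_def norm_mult mult_ac)
  moreover have "cmod ?c < cmod ?a"
  proof -
    have "of_real ((cmod ?a)\<^sup>2 - (cmod ?c)\<^sup>2) = (1::complex)"
      using r1 by (simp add: complex_norm_square[symmetric] del: of_real_power)
    then have "(cmod ?c)\<^sup>2 < (cmod ?a)\<^sup>2" by (metis of_real_eq_1_iff diff_gt_0_iff_gt zero_less_one)
    then show ?thesis by (simp add: power_less_imp_less_base)
  qed
  moreover have "x$1 \<noteq> 0 \<or> x$2 \<noteq> 0" using assms(3) by (auto simp: vec_eq_iff forall_2)
  ultimately have "0 < Re (?a * herm x (S *v x))"
    using two_mult_less_sq_sum[of "cmod ?c" "cmod ?a" "cmod (x$1)" "cmod (x$2)"] by force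
  then show ?thesis by auto
qed

lemma det_gen_prod: "det (gen_prod R k) = (\<Prod>i<k. det (R (Suc i)))"
  by (induction k) (simp_all add: det_mul det_mat_W mult.commute)

lemma det_mult_herm_involution_sq:
  assumes "unitaryW S" "S ** S = mat \<mu>" "\<not> is_scalar S" "x \<noteq> 0"
  shows "herm x (S *v x) \<noteq> 0"
    and "det S * (herm x (S *v x))\<^sup>2 = - of_real ((cmod (herm x (S *v x)))\<^sup>2)"
  using herm_trace_zero_unitary_nonzero[OF assms(1) involution_trace_det(1)[OF assms(2,3)] assms(4)]
    involution_herm_sq[OF assms(1,2)] involution_trace_det(2)[OF assms(2,3)]
  by auto

lemma cis_area_rep:
  assumes "n \<ge> 1" "is_Hn_rep n R" "\<forall>i\<in>{1..n}. \<not> is_scalar (R i)" "closed_ball_W p"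
  shows "cis (area_rep n R p) = cis (real n * pi)"
proof -
  obtain lam where lam: "gen_prod R n = mat lam" "lam \<noteq> 0" "orbit_pts R p n = lam *s p"
    using gen_prod_scalar assms(2,4) by metis
  let ?P = "orbit_pts R p"
  define w where "w i = triple centreW (?P i) (?P (Suc i))" for i
  define h where "h i = herm centreW (?P i)" for i
  define z where "z i = herm (?P i) (R (Suc i) *v ?P i)" for i
  define f where "f i = (h i * cnj (h i))\<^sup>2 * (det (R (Suc i)) * (z i)\<^sup>2)" for i
  have closed: "closed_ball_W (?P i)" if "i \<le> n" for i
    using closed_ball_W_orbit_pts assms(2,4) that by blast
  have h: "h i \<noteq> 0" if "i \<le> n" for i
    using herm_neg_closed_ball_nonzero[OF neg_W_centreW closed[OF that]] by (simp add: h_def)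
  have z: "z i \<noteq> 0 \<and> det (R (Suc i)) * (z i)\<^sup>2 = - of_real ((cmod (z i))\<^sup>2)" if i: "i < n" for i
  proof -
    obtain \<mu> where "unitaryW (R (Suc i))" "R (Suc i) ** R (Suc i) = mat \<mu>"
      using is_Hn_rep_generator[OF assms(2) i] .
    moreover have "\<not> is_scalar (R (Suc i))" using assms(3) i by simp
    moreover have "?P i \<noteq> 0" using closed[of i] i by (simp add: closed_ball_W_def)
    ultimately show ?thesis using det_mult_herm_involution_sq by (simp add: z_def)
  qed
  have w_sq: "(w i)\<^sup>2 = (h i)\<^sup>2 * (z i)\<^sup>2 * (cnj (h (Suc i)))\<^sup>2" for i
    by (simp add: w_def h_def z_def triple_def cnj_herm power_mult_distrib)
  have shift: "(\<Prod>i<n. (cnj (h (Suc i)))\<^sup>2) = lam\<^sup>2 * (\<Prod>i<n. (cnj (h i))\<^sup>2)"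
    using h[of 0] by (intro prod_lessThan_shift_cyclic)
      (simp_all add: h_def lam(3) herm_scale_right power_mult_distrib)
  have det: "lam\<^sup>2 = (\<Prod>i<n. det (R (Suc i)))"
    using det_gen_prod[of R n] by (simp add: lam(1) det_mat_W power2_eq_square)
  have sgn_f: "sgn (f i) = - 1" if "i < n" for i
  proof -
    define r where "r = ((cmod (h i))\<^sup>2)\<^sup>2 * (cmod (z i))\<^sup>2"
    have "f i = - of_real r"
      using z[OF that]
      by (simp add: r_def f_def complex_norm_square[symmetric] of_real_power[symmetric] del: of_real_power)
    moreover have "0 < r" using h[of i] z[OF that] that by (simp add: r_def)
    ultimately show ?thesis by (simp add: sgn_of_real)
  qed
  have "w i \<noteq> 0" if "i < n" for i
    using w_sq[of i] h[of i] h[of "Suc i"] z[of i] that by auto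
  then have "cis (area_rep n R p) = (\<Prod>i<n. sgn ((w i)\<^sup>2))"
    using area_rep_eq_sum[OF assms(1) lam(3,2)]
    by (simp add: cis_sum_lessThan w_def cis_double_Arg del: orbit_pts.simps)
  also have "\<dots> = sgn (\<Prod>i<n. f i)"
    by (simp add: sgn_prod_lessThan[symmetric] f_def w_sq prod.distrib shift det power_mult_distrib mult_ac)
  also have "\<dots> = (\<Prod>i<n. - 1)"
    unfolding sgn_prod_lessThan using sgn_f by (intro prod.cong) auto
  also have "\<dots> = cis (real n * pi)" by (simp add: cis_real_of_nat_mult_pi)
  finally show ?thesis .
qed

theorem lemma3p2:
  fixes n :: nat and R :: "nat \<Rightarrow> matW"
  assumes "n \<ge> 5" and "is_Hn_rep n R"
  shows "(\<forall>p q. closed_ball_W p \<longrightarrow> closed_ball_W q \<longrightarrow> area_rep n R p = area_rep n R q)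
       \<and> ((\<forall>i\<in>{1..n}. \<not> is_scalar (R i)) \<longrightarrow>
            (\<forall>p. closed_ball_W p \<longrightarrow> (\<exists>k::int. area_rep n R p = real n * pi + 2 * pi * of_int k)))"
proof -
  have "n \<ge> 1" using assms(1) by simp
  have "\<exists>k::int. area_rep n R p = real n * pi + 2 * pi * of_int k"
    if "\<forall>i\<in>{1..n}. \<not> is_scalar (R i)" "closed_ball_W p" for p
  proof -
    from cis_area_rep[OF \<open>n \<ge> 1\<close> assms(2) that] show ?thesis
      by (metis cis_eq_imp_2pi_multiple)
  qed
  then show ?thesis using area_rep_independent[OF \<open>n \<ge> 1\<close> assms(2)] by blast
qed

end
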